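(* Consider the setting described in the context and assume $D>2$. For $t\ge 1$ define $\mathcal{I}_0(t)=\bigcup_{m=0}^{t-1}\mathcal{F}_0(m)$, $\mathcal{I}_1(t)=\Big(\bigcup_{m=0}^{t-1}\mathcal{F}_{D-1}(m)\Big)\setminus \mathcal{I}_0(t)$, $\mathcal{I}_2(t)=V\setminus(\mathcal{I}_0(t)\cup\mathcal{I}_1(t))$. Then for every $t\ge1$: $\hat d_i(t)=m$ for all $i\in\mathcal{F}_0(m)$ with $0\le m<t$; $\hat d_i(t)=m$ for all $i\in\mathcal{F}_{D-1}(m)\cap\mathcal{I}_2(t)$; and $\hat d_i(t)\in\{t,t+1\}$ for all $i\in\mathcal{I}_1(t)$.
   Context: $G=(V,E)$ is a finite connected undirected graph with node set $V=\{0,\dots,N-1\}$; $\mathcal{N}(i)$ denotes the set of neighbours of $i$. Every edge has length $1$, $d_{ij}$ is the hop distance between $i$ and $j$, and $\mathcal{F}_k(m)=\{i\in V : d_{ik}=m\}$. The source set is $S(t)=\{D-1\}$ for $t\le 0$ and $S(t)=\{0\}$ for $t\ge 1$. The integer $D$ satisfies $\max_{i\in V}d_{i0}=D-1$, and nodes are labelled so that $0,1,\dots,D-1$ is a path in which node $i$ is a neighbour of $i+1$ with $d_{0,i}=i$ for $0\le i\le D-1$. Distance estimates evolve, for $t\ge1$, by $\hat d_i(t)=0$ if $i\in S(t)$ and $\hat d_i(t)=\min_{j\in\mathcal{N}(i)}\{\hat d_j(t-1)+1\}$ otherwise, with initial values $\hat d_i(0)=m$ for all $i\in\mathcal{F}_{D-1}(m)$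 (the steady state for source $D-1$). *)

theory Defs
  imports Main
begin

definition is_walk :: "(nat \<Rightarrow> nat \<Rightarrow> bool) \<Rightarrow> nat \<Rightarrow> nat list \<Rightarrow> bool" where
  "is_walk adj N xs \<longleftrightarrow> xs \<noteq> [] \<and> set xs \<subseteq> {..<N} \<and>
     (\<forall>k. Suc k < length xs \<longrightarrow> adj (xs ! k) (xs ! Suc k))"

definition hop_dist :: "(nat \<Rightarrow> nat \<Rightarrow> bool) \<Rightarrow> nat \<Rightarrow> nat \<Rightarrow> nat \<Rightarrow> nat" where
  "hop_dist adj N i j = (LEAST n. \<exists>xs. is_walk adj N xs \<and> hd xs = i \<and> last xs = j \<and> length xs = Suc n)"

definition undirected_graph :: "(nat \<Rightarrow> nat \<Rightarrow> bool) \<Rightarrow> nat \<Rightarrow> bool" where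
  "undirected_graph adj N \<longleftrightarrow> (\<forall>i j. adj i j \<longrightarrow> i < N \<and> j < N \<and> adj j i \<and> i \<noteq> j)"

definition connected_graph :: "(nat \<Rightarrow> nat \<Rightarrow> bool) \<Rightarrow> nat \<Rightarrow> bool" where
  "connected_graph adj N \<longleftrightarrow> 0 < N \<and> (\<forall>i<N. \<forall>j<N. \<exists>xs. is_walk adj N xs \<and> hd xs = i \<and> last xs = j)"

text \<open>Distance estimates: at time 0 the steady state for source D-1; for t >= 1 the source is node 0.\<close>
primrec dhat :: "(nat \<Rightarrow> nat \<Rightarrow> bool) \<Rightarrow> nat \<Rightarrow> nat \<Rightarrow> nat \<Rightarrow> nat \<Rightarrow> nat" where
  "dhat adj N D 0 i = hop_dist adj N i (D - 1)"
| "dhat adj N D (Suc t) i = (if i = 0 then 0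
      else Min ((\<lambda>j. dhat adj N D t j + 1) ` {j. j < N \<and> adj i j}))"

end

theory Submission
  imports Defs
begin

text \<open>
  Since hop distances are 1-Lipschitz along edges, induction on \<open>t\<close> shows that \<open>dhat t i\<close> is at least
  \<open>d(i,0)\<close> if \<open>d(i,0) < t\<close>, and at least \<open>max t (d(i,D-1))\<close> otherwise. Conversely a shortest path to \<open>0\<close>
  gives \<open>d(i,0)\<close> once \<open>d(i,0) < t\<close>, and a shortest path to the old source \<open>D - 1\<close> followed by
  bouncing on an edge at \<open>D - 1\<close> gives \<open>d(i,D-1)\<close> if that is \<open>\<ge> t\<close>, and \<open>t\<close> or \<open>t + 1\<close> otherwise.
\<close>

definition walk_of_length :: "(nat \<Rightarrow> nat \<Rightarrow> bool) \<Rightarrow> nat \<Rightarrow> nat \<Rightarrow> nat \<Rightarrow> nat \<Rightarrow> bool" where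
  "walk_of_length adj N n i j \<longleftrightarrow>
     (\<exists>xs. is_walk adj N xs \<and> hd xs = i \<and> last xs = j \<and> length xs = Suc n)"

lemma hop_dist_le: "walk_of_length adj N n i j \<Longrightarrow> hop_dist adj N i j \<le> n"
  unfolding hop_dist_def walk_of_length_def[symmetric] by (rule Least_le)

lemma walk_of_length_hop_dist:
  assumes "connected_graph adj N" and "i < N" and "j < N"
  shows "walk_of_length adj N (hop_dist adj N i j) i j"
proof -
  obtain xs where xs: "is_walk adj N xs" "hd xs = i" "last xs = j"
    using assms unfolding connected_graph_def by blast
  then have "walk_of_length adj N (length xs - 1) i j"
    unfolding walk_of_length_def by (intro exI[of _ xs]) (auto simp: is_walk_def)
  then show ?thesis
    unfolding hop_dist_def walk_of_length_def[symmetric] by (rule LeastI)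
qed

lemma hop_dist_self: "i < N \<Longrightarrow> hop_dist adj N i i = 0"
proof -
  assume "i < N"
  then have "walk_of_length adj N 0 i i"
    unfolding walk_of_length_def is_walk_def by (intro exI[of _ "[i]"]) simp
  then show ?thesis using hop_dist_le by fastforce
qed

lemma hop_dist_eq_0_iff:
  assumes "connected_graph adj N" and "i < N" and "j < N"
  shows "hop_dist adj N i j = 0 \<longleftrightarrow> i = j"
proof
  assume "hop_dist adj N i j = 0"
  with walk_of_length_hop_dist[OF assms] obtain xs
    where "hd xs = i" "last xs = j" "length xs = 1"
    unfolding walk_of_length_def by auto
  then show "i = j" by (cases xs) auto
qed (use assms hop_dist_self in simp)

lemma hop_dist_le_adj:
  assumes conn: "connected_graph adj N" and graph: "undirected_graph adj N"
    and ik: "adj i k" and j: "j < N"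
  shows "hop_dist adj N i j \<le> hop_dist adj N k j + 1"
proof -
  have "i < N" "k < N" using ik graph unfolding undirected_graph_def by auto
  with walk_of_length_hop_dist[OF conn \<open>k < N\<close> j] obtain xs
    where xs: "is_walk adj N xs" "hd xs = k" "last xs = j" "length xs = Suc (hop_dist adj N k j)"
    unfolding walk_of_length_def by auto
  have "is_walk adj N (i # xs)"
    using xs ik \<open>i < N\<close> unfolding is_walk_def
    by (auto simp: nth_Cons hd_conv_nth split: nat.splits)
  with xs have "walk_of_length adj N (Suc (hop_dist adj N k j)) i j"
    unfolding walk_of_length_def by (intro exI[of _ "i # xs"]) auto
  then show ?thesis using hop_dist_le by fastforce
qed

lemma hop_dist_Suc_imp_adj:
  assumes conn: "connected_graph adj N" and graph: "undirected_graph adj N"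
    and "i < N" "j < N" and dist: "hop_dist adj N i j = Suc n"
  obtains k where "adj i k" "hop_dist adj N k j = n"
proof -
  from walk_of_length_hop_dist[OF conn \<open>i < N\<close> \<open>j < N\<close>] dist obtain xs
    where xs: "is_walk adj N xs" "hd xs = i" "last xs = j" "length xs = Suc (Suc n)"
    unfolding walk_of_length_def by auto
  then obtain k ys where xs_eq: "xs = i # k # ys" by (metis Suc_length_conv list.sel(1))
  have "adj (xs ! 0) (xs ! 1)" using xs(1,4) unfolding is_walk_def by simp
  then have ik: "adj i k" using xs_eq by simp
  have "walk_of_length adj N n k j"
    unfolding walk_of_length_def
    by (intro exI[of _ "k # ys"]) (use xs xs_eq in \<open>auto simp: is_walk_def\<close>)
  then have "hop_dist adj N k j \<le> n" by (rule hop_dist_le)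
  moreover have "hop_dist adj N i j \<le> hop_dist adj N k j + 1"
    by (rule hop_dist_le_adj[OF conn graph ik \<open>j < N\<close>])
  ultimately show ?thesis using that ik dist by simp
qed

text \<open>
  A walk of length \<open>t\<close> that runs \<open>m\<close> steps to the old source and then bounces on an edge there
  ends at the old source or at a neighbour of it, according to the parity of \<open>t - m\<close>.
\<close>
definition stale_estimate :: "nat \<Rightarrow> nat \<Rightarrow> nat" where
  "stale_estimate t m = (if t \<le> m then m else t + (t - m) mod 2)"

lemma stale_estimate_Suc_Suc: "stale_estimate (Suc t) (Suc m) = stale_estimate t m + 1"
  by (auto simp: stale_estimate_def Suc_diff_le)

lemma stale_estimate_bounce: "stale_estimate t 1 + 1 \<le> stale_estimate (Suc t) 0"
  by (cases t) (auto simp: stale_estimate_def mod_Suc)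

context
  fixes adj :: "nat \<Rightarrow> nat \<Rightarrow> bool" and N D :: nat
  assumes graph: "undirected_graph adj N"
    and conn: "connected_graph adj N"
begin

lemma adj_sym_bounded: "adj i j \<Longrightarrow> i < N \<and> j < N \<and> adj j i \<and> i \<noteq> j"
  using graph unfolding undirected_graph_def by blast

lemma zero_less_N: "0 < N"
  using conn unfolding connected_graph_def by blast

lemma adj_closer_to_zero:
  assumes "i < N" and "i \<noteq> 0"
  obtains j where "adj i j" "hop_dist adj N j 0 + 1 = hop_dist adj N i 0"
proof -
  have "hop_dist adj N i 0 \<noteq> 0"
    using hop_dist_eq_0_iff[OF conn \<open>i < N\<close> zero_less_N] assms by simp
  then obtain n where n: "hop_dist adj N i 0 = Suc n" using not0_implies_Suc by blast
  obtain j where "adj i j" "hop_dist adj N j 0 = n"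
    by (rule hop_dist_Suc_imp_adj[OF conn graph \<open>i < N\<close> zero_less_N n])
  with n show ?thesis by (intro that) simp_all
qed

lemma dhat_Suc_le_adj:
  "i \<noteq> 0 \<Longrightarrow> adj i j \<Longrightarrow> dhat adj N D (Suc t) i \<le> dhat adj N D t j + 1"
  using adj_sym_bounded[of i j] by (auto intro!: Min_le)

lemma dhat_Suc_ge:
  assumes "i < N" and "i \<noteq> 0" and "\<And>j. adj i j \<Longrightarrow> x \<le> dhat adj N D t j + 1"
  shows "x \<le> dhat adj N D (Suc t) i"
proof -
  obtain j where "adj i j" using adj_closer_to_zero[OF assms(1,2)] .
  then have "{j. j < N \<and> adj i j} \<noteq> {}" using adj_sym_bounded by blast
  then have "x \<le> Min ((\<lambda>j. dhat adj N D t j + 1) ` {j. j < N \<and> adj i j})"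
    using assms(3) by (simp add: Min_ge_iff)
  then show ?thesis using \<open>i \<noteq> 0\<close> by simp
qed

lemma dhat_lower_bound:
  assumes "D - 1 < N" and "i < N"
  shows "(if hop_dist adj N i 0 < t then hop_dist adj N i 0
          else max t (hop_dist adj N i (D - 1))) \<le> dhat adj N D t i"
  using \<open>i < N\<close>
proof (induction t arbitrary: i)
  case (Suc t)
  show ?case
  proof (cases "i = 0")
    case True
    then show ?thesis using hop_dist_self[OF zero_less_N] by simp
  next
    case False
    show ?thesis
    proof (rule dhat_Suc_ge[OF Suc.prems False])
      fix j assume ij: "adj i j"
      have "hop_dist adj N i 0 \<le> hop_dist adj N j 0 + 1"
        and "hop_dist adj N i (D - 1) \<le> hop_dist adj N j (D - 1) + 1"
        using hop_dist_le_adj[OF conn graph ij] zero_less_N \<open>D - 1 < N\<close> by auto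
      with Suc.IH[of j] adj_sym_bounded[OF ij]
      show "(if hop_dist adj N i 0 < Suc t then hop_dist adj N i 0
             else max (Suc t) (hop_dist adj N i (D - 1))) \<le> dhat adj N D t j + 1"
        by (auto split: if_splits)
    qed
  qed
qed simp

lemma dhat_le_hop_dist_new_source:
  assumes "i < N" and "hop_dist adj N i 0 < t"
  shows "dhat adj N D t i \<le> hop_dist adj N i 0"
  using assms
proof (induction t arbitrary: i)
  case (Suc t)
  show ?case
  proof (cases "i = 0")
    case False
    obtain j where ij: "adj i j" and dist: "hop_dist adj N j 0 + 1 = hop_dist adj N i 0"
      using adj_closer_to_zero[OF Suc.prems(1) False] .
    have "dhat adj N D t j \<le> hop_dist adj N j 0"
      using Suc.IH[of j] Suc.prems(2) dist adj_sym_bounded[OF ij] by simp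
    with dhat_Suc_le_adj[OF False ij, of t] dist show ?thesis by simp
  qed simp
qed simp

lemma dhat_le_stale_estimate:
  assumes "D - 1 < N" and "i < N"
  shows "dhat adj N D t i \<le> stale_estimate t (hop_dist adj N i (D - 1))"
  using \<open>i < N\<close>
proof (induction t arbitrary: i)
  case 0
  then show ?case by (simp add: stale_estimate_def)
next
  case (Suc t)
  show ?case
  proof (cases "i = 0")
    case False
    show ?thesis
    proof (cases "hop_dist adj N i (D - 1)")
      case 0
      obtain j where ij: "adj i j" using adj_closer_to_zero[OF Suc.prems False] .
      have "i = D - 1" using 0 hop_dist_eq_0_iff[OF conn Suc.prems \<open>D - 1 < N\<close>] by simp
      then have "hop_dist adj N j (D - 1) \<noteq> 0" and "hop_dist adj N j (D - 1) \<le> 1"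
        using hop_dist_eq_0_iff[OF conn _ \<open>D - 1 < N\<close>, of j] adj_sym_bounded[OF ij]
          hop_dist_le_adj[OF conn graph _ \<open>D - 1 < N\<close>, of j i] 0 by auto
      then have "dhat adj N D t j \<le> stale_estimate t 1"
        using Suc.IH[of j] adj_sym_bounded[OF ij] by (simp add: le_Suc_eq)
      with dhat_Suc_le_adj[OF False ij, of t] stale_estimate_bounce[of t] 0
      show ?thesis by simp
    next
      case (Suc n)
      obtain j where ij: "adj i j" and "hop_dist adj N j (D - 1) = n"
        using hop_dist_Suc_imp_adj[OF conn graph \<open>i < N\<close> \<open>D - 1 < N\<close> Suc] .
      then have "dhat adj N D t j \<le> stale_estimate t n"
        using Suc.IH[of j] adj_sym_bounded[OF ij] by simp
      with dhat_Suc_le_adj[OF False ij, of t] stale_estimate_Suc_Suc[of t n] Suc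
      show ?thesis by simp
    qed
  qed simp
qed

end

theorem lemma2:
  fixes adj :: "nat \<Rightarrow> nat \<Rightarrow> bool" and N D :: nat
  assumes graph: "undirected_graph adj N"
    and conn: "connected_graph adj N"
    and ecc: "Max ((\<lambda>i. hop_dist adj N i 0) ` {..<N}) = D - 1"
    and path_adj: "\<forall>i. Suc i < D \<longrightarrow> adj i (Suc i)"
    and path_dist: "\<forall>i<D. hop_dist adj N 0 i = i"
    and D_gt: "D > 2"
  shows "\<forall>t\<ge>1.
     let I0 = {i. i < N \<and> hop_dist adj N i 0 < t};
         I1 = {i. i < N \<and> hop_dist adj N i (D - 1) < t} - I0;
         I2 = {..<N} - (I0 \<union> I1)
     in (\<forall>m<t. \<forall>i<N. hop_dist adj N i 0 = m \<longrightarrow> dhat adj N D t i = m)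
      \<and> (\<forall>m. \<forall>i\<in>I2. hop_dist adj N i (D - 1) = m \<longrightarrow> dhat adj N D t i = m)
      \<and> (\<forall>i\<in>I1. dhat adj N D t i \<in> {t, t + 1})"
proof (intro allI impI)
  fix t :: nat
  have "adj (D - 2) (Suc (D - 2))" using path_adj D_gt by simp
  moreover have "Suc (D - 2) = D - 1" using D_gt by simp
  ultimately have old_source: "D - 1 < N" using graph unfolding undirected_graph_def by metis
  note lower = dhat_lower_bound[OF graph conn old_source, of _ t]
    and upper_old = dhat_le_stale_estimate[OF graph conn old_source, of _ t]
  have new_source: "dhat adj N D t i = hop_dist adj N i 0"
    if "i < N" "hop_dist adj N i 0 < t" for i
    using lower[OF that(1)] dhat_le_hop_dist_new_source[OF graph conn that, where D = D] that(2) by simp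
  have unreached: "dhat adj N D t i = hop_dist adj N i (D - 1)"
    if "i < N" "\<not> hop_dist adj N i 0 < t" "\<not> hop_dist adj N i (D - 1) < t" for i
    using lower[OF that(1)] upper_old[OF that(1)] that(2,3) by (simp add: stale_estimate_def)
  have bouncing: "dhat adj N D t i \<in> {t, t + 1}"
    if "i < N" "\<not> hop_dist adj N i 0 < t" "hop_dist adj N i (D - 1) < t" for i
    using lower[OF that(1)] upper_old[OF that(1)] that(2,3) by (auto simp: stale_estimate_def)
  show "let I0 = {i. i < N \<and> hop_dist adj N i 0 < t};
         I1 = {i. i < N \<and> hop_dist adj N i (D - 1) < t} - I0;
         I2 = {..<N} - (I0 \<union> I1)
     in (\<forall>m<t. \<forall>i<N. hop_dist adj N i 0 = m \<longrightarrow> dhat adj N D t i = m)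
      \<and> (\<forall>m. \<forall>i\<in>I2. hop_dist adj N i (D - 1) = m \<longrightarrow> dhat adj N D t i = m)
      \<and> (\<forall>i\<in>I1. dhat adj N D t i \<in> {t, t + 1})"
    unfolding Let_def using new_source unreached bouncing by auto
qed

end
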